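(* Let $n>3$ and let $r$ be an integer with $r\equiv3\pmod4$ and $3\le r\le n$. Suppose that for every $0\le k<n$, $\mathbb{Z}_k$ is a $1$-Gray code for $\mathcal{Z}_k$ with $\mathrm{first}(\mathbb{Z}_k)=0(001)^\star$ and $\mathrm{last}(\mathbb{Z}_k)=(001)^\star$ (where $\mathbb{Z}_0=(\epsilon)$). Then: (i) if $r=3$, there is a $1$-Gray code $\Delta^3_n$ for $\mathcal{D}^3_n$ with first word $0010(001)^\star$ and last word $(001)^\star$; (ii) if $r=n-2$, there is a $1$-Gray code $\Delta^{n-2}_n$ for $\mathcal{D}^{n-2}_n\cup\mathcal{D}^{n-3}_n$ with first word $0^{n-4}1000$ and last word $0^{n-3}100$; (iii) if $r=n-1$, there is a $1$-Gray code $\Delta^{n-1}_n$ for $(\mathcal{D}^n_n\cup\mathcal{D}^{n-1}_n\cup\mathcal{D}^{n-2}_n)\setminus\{0^{n-1}1\}$ with first word $0^{n-3}100$ and last word $0^{n-2}10$; (iv) if $r=n$, there is a $1$-Gray code $\Delta^n_n$ for $\mathcal{D}^n_n\cup\mathcal{D}^{n-1}_n$ with first word $0^{n-2}10$ and last word $0^{n-1}1$; (v) if $r\notin\{3,n-2,n-1,n\}$, there is a $1$-Gray code $\Delta^r_n$ for $\mathcal{D}^r_n\cup\mathcal{D}^{r-1}_n$ with first word $0^{r-1}10(001)^\star$ and last word $0^{r-1}1(001)^\star$.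
   Context: A binary word is $1$-decreasing if for every maximal run of $0$s, of length $a>0$, together with the (possibly empty) maximal run of $1$s immediately following it, of length $b$, one has $a>b$. For $m\ge1$, $\mathcal{Z}_m$ is the set of $1$-decreasing words of length $m$ starting with $0$; $\mathcal{Z}_0=\{\epsilon\}$. For $3\le r\le n$, $\mathcal{D}^r_n=\bigcup_{j=1}^{\lfloor(r-1)/2\rfloor}0^{r-j}1^j\cdot\mathcal{Z}_{n-r}$, where $w\cdot\mathcal{A}=\{wa:a\in\mathcal{A}\}$. A $1$-Gray code for a set of equal-length words is an ordered list of all its elements, each once, with consecutive words differing in at most one position; $\mathrm{first}$ and $\mathrm{last}$ denote the first and last elements of a list. In a word of prescribed length (here $n$) written $u(001)^\star$, $(001)^\star$ denotes the prefix of $001001\cdots$ of the length needed to reach that total length. *)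

theory Defs
  imports Main
begin

text \<open>Binary words are bool lists: False = 0, True = 1.\<close>

definition one_decreasing :: "bool list \<Rightarrow> bool" where
  "one_decreasing w \<longleftrightarrow>
     (\<forall>u a b v. w = u @ replicate a False @ replicate b True @ v
        \<and> (u = [] \<or> last u = True) \<and> 0 < a
        \<and> (0 < b \<or> v = []) \<and> (v = [] \<or> hd v = False)
        \<longrightarrow> b < a)"

definition Zset :: "nat \<Rightarrow> bool list set" where
  "Zset m = (if m = 0 then {[]}
             else {w. length w = m \<and> hd w = False \<and> one_decreasing w})"

definition Dset :: "nat \<Rightarrow> nat \<Rightarrow> bool list set" where
  "Dset r n = (\<Union>j\<in>{1..(r - 1) div 2}.
                 {replicate (r - j) False @ replicate j True @ z | z. z \<in> Zset (n - r)})"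

definition hamming :: "bool list \<Rightarrow> bool list \<Rightarrow> nat" where
  "hamming u v = card {i. i < length u \<and> u ! i \<noteq> v ! i}"

definition gray1 :: "bool list list \<Rightarrow> bool list set \<Rightarrow> bool" where
  "gray1 L S \<longleftrightarrow> distinct L \<and> set L = S \<and>
     (\<forall>i. Suc i < length L \<longrightarrow>
        length (L ! i) = length (L ! Suc i) \<and> hamming (L ! i) (L ! Suc i) \<le> 1)"

text \<open>u(001)^* completed to total length n.\<close>
definition fill :: "bool list \<Rightarrow> nat \<Rightarrow> bool list" where
  "fill u n = u @ take (n - length u) (concat (replicate n [False, False, True]))"

end

theory Submission
  imports Defs
begin

text \<open>
  A word of \<open>D\<^sup>R\<^sub>n\<close> is \<open>0\<^sup>R\<^sup>-\<^sup>j 1\<^sup>j z\<close> with \<open>z \<in> Z\<^sub>n\<^sub>-\<^sub>R\<close>, and since \<open>z\<close> is empty or starts with 0,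
  the level \<open>R\<close>, the index \<open>j\<close> and the suffix \<open>z\<close> are determined by the word. One bit flip
  in the prefix turns \<open>0\<^sup>R\<^sup>-\<^sup>j 1\<^sup>j z\<close> into \<open>0\<^sup>R\<^sup>-\<^sup>j\<^sup>-\<^sup>1 1\<^sup>j\<^sup>+\<^sup>1 z\<close> (a step inside level \<open>R\<close>), and
  \<open>0\<^sup>R\<^sup>-\<^sup>j\<^sup>-\<^sup>1 1\<^sup>j\<^sup>+\<^sup>1 z\<close> into \<open>0\<^sup>R\<^sup>-\<^sup>j\<^sup>-\<^sup>1 1\<^sup>j 0z\<close> (a rung down to level \<open>R - 1\<close>). The Gray codes
  run through the copies \<open>0\<^sup>R\<^sup>-\<^sup>j 1\<^sup>j \<cdot> Z\<^sub>k\<close> of the given codes boustrophedon-wise,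
  alternately forwards and backwards, passing from copy to copy by steps and rungs; the rungs
  between the two levels are available because \<open>first(Z\<^sub>k\<^sub>+\<^sub>1) = 0 last(Z\<^sub>k)\<close>. The copies of
  level \<open>r - 1\<close> are visited in pairs, which is where \<open>(r - 1)/2\<close> odd, i.e. \<open>r \<equiv> 3 (mod 4)\<close>,
  is needed. For \<open>r = n - 2\<close> and \<open>r = n\<close> the upper level has a single suffix and the code is
  used backwards; for \<open>r = n - 1\<close> the words \<open>0\<^sup>n\<^sup>-\<^sup>j 1\<^sup>j\<close> are read as level \<open>n - 1\<close> words
  with suffix 1.
\<close>

section \<open>Gray lists\<close>

definition adjacent :: "bool list \<Rightarrow> bool list \<Rightarrow> bool" where
  "adjacent u v \<longleftrightarrow> length u = length v \<and> hamming u v \<le> 1"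

lemma gray1_iff_successively:
  "gray1 L S \<longleftrightarrow> distinct L \<and> set L = S \<and> successively adjacent L"
  by (auto simp: gray1_def adjacent_def successively_conv_nth)

lemma hamming_commute: "length u = length v \<Longrightarrow> hamming u v = hamming v u"
  unfolding hamming_def by (rule arg_cong[where f = card]) auto

lemma adjacent_sym: "adjacent u v \<Longrightarrow> adjacent v u"
  by (simp add: adjacent_def hamming_commute)

lemma adjacent_flip: "adjacent (p @ x # s) (p @ y # s)"
proof -
  have "{i. i < length (p @ x # s) \<and> (p @ x # s) ! i \<noteq> (p @ y # s) ! i} \<subseteq> {length p}"
    by (auto simp: nth_append nth_Cons')
  then have "hamming (p @ x # s) (p @ y # s) \<le> card {length p}"
    unfolding hamming_def by (rule card_mono[rotated]) simp
  then show ?thesis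
    by (simp add: adjacent_def)
qed

lemma hamming_append_left:
  assumes "length u = length v"
  shows "hamming (c @ u) (c @ v) = hamming u v"
proof -
  have "{i. i < length (c @ u) \<and> (c @ u) ! i \<noteq> (c @ v) ! i}
        = (+) (length c) ` {i. i < length u \<and> u ! i \<noteq> v ! i}"
  proof (rule set_eqI)
    fix i
    show "i \<in> {i. i < length (c @ u) \<and> (c @ u) ! i \<noteq> (c @ v) ! i} \<longleftrightarrow>
          i \<in> (+) (length c) ` {i. i < length u \<and> u ! i \<noteq> v ! i}"
      using assms by (cases "i < length c") (auto simp: nth_append image_iff intro!: exI[of _ "i - length c"])
  qed
  then show ?thesis
    unfolding hamming_def by (simp add: card_image)
qed

lemma adjacent_append_left: "adjacent u v \<Longrightarrow> adjacent (c @ u) (c @ v)"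
  by (simp add: adjacent_def hamming_append_left)

lemma gray1_singleton: "gray1 [w] {w}"
  by (simp add: gray1_iff_successively)

lemma gray1_append:
  assumes "gray1 xs S" "gray1 ys T" "S \<inter> T = {}"
    and "xs \<noteq> [] \<Longrightarrow> ys \<noteq> [] \<Longrightarrow> adjacent (last xs) (hd ys)"
  shows "gray1 (xs @ ys) (S \<union> T)"
  using assms by (auto simp: gray1_iff_successively successively_append_iff)

lemma gray1_rev: "gray1 xs S \<Longrightarrow> gray1 (rev xs) S"
  by (auto simp: gray1_iff_successively successively_mono adjacent_sym)

lemma gray1_tl: "gray1 xs S \<Longrightarrow> gray1 (tl xs) (S - {hd xs})"
  by (cases xs) (auto simp: gray1_iff_successively successively_Cons)

lemma gray1_map_append: "gray1 xs S \<Longrightarrow> gray1 (map ((@) c) xs) ((@) c ` S)"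
  by (auto simp: gray1_iff_successively successively_map distinct_map inj_on_def
           intro: successively_mono adjacent_append_left)

section \<open>Prefixes \<open>0\<^sup>R\<^sup>-\<^sup>j 1\<^sup>j\<close> and layers\<close>

definition zeros_ones :: "nat \<Rightarrow> nat \<Rightarrow> bool list" where
  "zeros_ones R j = replicate (R - j) False @ replicate j True"

lemma length_zeros_ones [simp]: "j \<le> R \<Longrightarrow> length (zeros_ones R j) = R"
  by (simp add: zeros_ones_def)

lemma zeros_ones_Suc: "zeros_ones (Suc R) (Suc j) = zeros_ones R j @ [True]"
  by (simp add: zeros_ones_def replicate_append_same)

lemma adjacent_zeros_ones_Suc:
  assumes "Suc j \<le> R"
  shows "adjacent (zeros_ones R j @ z) (zeros_ones R (Suc j) @ z)"
proof -
  have "zeros_ones R j = replicate (R - Suc j) False @ [False] @ replicate j True"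
    using assms by (simp add: zeros_ones_def replicate_append_same Suc_diff_Suc[symmetric])
  moreover have "zeros_ones R (Suc j) = replicate (R - Suc j) False @ [True] @ replicate j True"
    by (simp add: zeros_ones_def)
  ultimately show ?thesis
    using adjacent_flip by simp
qed

lemma adjacent_zeros_ones_rung:
  assumes "j < R"
  shows "adjacent (zeros_ones R (Suc j) @ z) (zeros_ones (R - 1) j @ False # z)"
  using assms adjacent_flip zeros_ones_Suc[of "R - 1" j] by (cases R) simp_all

text \<open>Suffixes from \<open>Z\<^sub>k\<close> start with 0, which makes the decomposition \<open>0\<^sup>R\<^sup>-\<^sup>j 1\<^sup>j z\<close>
  of a word unique (\<open>zeros_ones_append_eq\<close>).\<close>

definition no_leading_one :: "bool list \<Rightarrow> bool" where
  "no_leading_one z \<longleftrightarrow> z = [] \<or> hd z = False"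

lemma zeros_ones_append_eq_same_level:
  assumes "j \<le> R" "j' \<le> R"
  shows "zeros_ones R j @ z = zeros_ones R j' @ z' \<longleftrightarrow> j = j' \<and> z = z'"
proof
  assume eq: "zeros_ones R j @ z = zeros_ones R j' @ z'"
  then have "zeros_ones R j = zeros_ones R j'" and "z = z'"
    using assms append_eq_append_conv[of "zeros_ones R j" "zeros_ones R j'" z z'] by simp_all
  moreover have "length (filter id (zeros_ones R i)) = i" for i
    by (simp add: zeros_ones_def)
  ultimately show "j = j' \<and> z = z'"
    by metis
qed simp

lemma zeros_ones_eq_iff: "j \<le> R \<Longrightarrow> j' \<le> R \<Longrightarrow> zeros_ones R j = zeros_ones R j' \<longleftrightarrow> j = j'"
  using zeros_ones_append_eq_same_level[of j R j' "[]" "[]"] by simp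

lemma zeros_ones_append_eq:
  assumes "0 < j" "j \<le> R" "0 < j'" "j' \<le> R'" "no_leading_one z" "no_leading_one z'"
    and eq: "zeros_ones R j @ z = zeros_ones R' j' @ z'"
  shows "R = R' \<and> j = j' \<and> z = z'"
proof -
  have split: "takeWhile Not (zeros_ones R j @ z) = replicate (R - j) False
      \<and> takeWhile id (dropWhile Not (zeros_ones R j @ z)) = replicate j True
      \<and> dropWhile id (dropWhile Not (zeros_ones R j @ z)) = z"
    if "0 < j" "no_leading_one z" for R j z
  proof -
    obtain i where j: "j = Suc i"
      using \<open>0 < j\<close> by (cases j) auto
    have "takeWhile id z = []" "dropWhile id z = z"
      using \<open>no_leading_one z\<close> by (cases z; simp add: no_leading_one_def)+
    moreover have "takeWhile Not (replicate a False @ True # w) = replicate a False"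
      and "dropWhile Not (replicate a False @ w) = dropWhile Not w"
      and "takeWhile id (replicate a True @ w) = replicate a True @ takeWhile id w"
      and "dropWhile id (replicate a True @ w) = dropWhile id w" for a w
      by (induction a) auto
    ultimately show ?thesis
      unfolding zeros_ones_def j by simp
  qed
  have "R - j = R' - j'" "j = j'" "z = z'"
    using split[OF assms(1,5)] split[OF assms(3,6)] eq by (metis length_replicate)+
  then show ?thesis
    using assms(2,4) by simp
qed

definition layer :: "nat \<Rightarrow> nat set \<Rightarrow> bool list set \<Rightarrow> bool list set" where
  "layer R J S = {zeros_ones R j @ z | j z. j \<in> J \<and> z \<in> S}"

lemma layer_empty [simp]: "layer R {} S = {}" "layer R J {} = {}"
  by (simp_all add: layer_def)

lemma layer_mono: "J \<subseteq> J' \<Longrightarrow> S \<subseteq> S' \<Longrightarrow> layer R J S \<subseteq> layer R J' S'"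
  by (auto simp: layer_def)

lemma layer_Un: "layer R (J \<union> J') S = layer R J S \<union> layer R J' S"
  by (auto simp: layer_def)

lemma layer_Un_suffixes: "layer R J S \<union> layer R J S' = layer R J (S \<union> S')"
  by (auto simp: layer_def)

lemma layer_True: "layer R J {[True]} = layer (Suc R) (Suc ` J) {[]}"
  by (force simp: layer_def zeros_ones_Suc)

lemma image_append_zeros_ones: "(@) (zeros_ones R j) ` S = layer R {j} S"
  by (auto simp: layer_def)

lemma layer_Int_same_level:
  assumes "J \<subseteq> {..R}" "J' \<subseteq> {..R}"
  shows "layer R J S \<inter> layer R J' S' = layer R (J \<inter> J') (S \<inter> S')"
proof (intro equalityI subsetI)
  fix w
  assume "w \<in> layer R J S \<inter> layer R J' S'"
  then obtain j z j' z' where "j \<in> J" "z \<in> S" "j' \<in> J'" "z' \<in> S'"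
    and "w = zeros_ones R j @ z" "w = zeros_ones R j' @ z'"
    unfolding layer_def by blast
  moreover have "j \<le> R" "j' \<le> R"
    using assms \<open>j \<in> J\<close> \<open>j' \<in> J'\<close> by auto
  ultimately show "w \<in> layer R (J \<inter> J') (S \<inter> S')"
    unfolding layer_def using zeros_ones_append_eq_same_level by blast
qed (auto simp: layer_def)

lemma layer_Int_other_level:
  assumes "R \<noteq> R'" "J \<subseteq> {1..R}" "J' \<subseteq> {1..R'}" "\<forall>z\<in>S \<union> S'. no_leading_one z"
  shows "layer R J S \<inter> layer R' J' S' = {}"
proof (rule equals0I)
  fix w
  assume "w \<in> layer R J S \<inter> layer R' J' S'"
  then obtain j z j' z' where "j \<in> J" "z \<in> S" "j' \<in> J'" "z' \<in> S'"
    and eq: "zeros_ones R j @ z = zeros_ones R' j' @ z'"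
    unfolding layer_def by blast
  then have "0 < j" "j \<le> R" "0 < j'" "j' \<le> R'" "no_leading_one z" "no_leading_one z'"
    using assms(2-4) by auto
  then show False
    using zeros_ones_append_eq[OF _ _ _ _ _ _ eq] assms(1) by blast
qed

section \<open>Snakes and ladders\<close>

lemma gray1_column:
  assumes "b \<le> Suc R"
  shows "gray1 (map (\<lambda>j. zeros_ones R j @ z) [a..<b]) (layer R {a..<b} {z})"
proof -
  have "inj_on (\<lambda>j. zeros_ones R j @ z) {a..<b}"
    using assms by (auto simp: inj_on_def zeros_ones_eq_iff)
  moreover have "successively adjacent (map (\<lambda>j. zeros_ones R j @ z) [a..<b])"
    using assms adjacent_zeros_ones_Suc by (auto simp: successively_conv_nth)
  ultimately show ?thesis
    by (auto simp: gray1_iff_successively distinct_map layer_def)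
qed

definition zigzag :: "nat \<Rightarrow> bool list list \<Rightarrow> nat \<Rightarrow> bool list list" where
  "zigzag R Q i = map ((@) (zeros_ones R (2*i+2))) Q @ map ((@) (zeros_ones R (2*i+1))) (rev Q)"

lemma zigzag_eq_Nil_iff [simp]: "zigzag R Q i = [] \<longleftrightarrow> Q = []"
  by (simp add: zigzag_def)

lemma hd_zigzag: "Q \<noteq> [] \<Longrightarrow> hd (zigzag R Q i) = zeros_ones R (2*i+2) @ hd Q"
  by (simp add: zigzag_def hd_map)

lemma last_zigzag: "Q \<noteq> [] \<Longrightarrow> last (zigzag R Q i) = zeros_ones R (2*i+1) @ hd Q"
  by (simp add: zigzag_def last_map last_rev)

lemma gray1_zigzag:
  assumes "gray1 Q S" "2*i+2 \<le> R"
  shows "gray1 (zigzag R Q i) (layer R {2*i+1, 2*i+2} S)"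
proof -
  have "gray1 (zigzag R Q i) (layer R {2*i+2} S \<union> layer R {2*i+1} S)"
    unfolding zigzag_def image_append_zeros_ones[symmetric]
  proof (rule gray1_append[OF gray1_map_append gray1_map_append])
    show "gray1 Q S" "gray1 (rev Q) S"
      using assms(1) by (simp_all add: gray1_rev)
    show "(@) (zeros_ones R (2*i+2)) ` S \<inter> (@) (zeros_ones R (2*i+1)) ` S = {}"
      using assms(2) by (simp add: image_append_zeros_ones layer_Int_same_level)
    show "adjacent (last (map ((@) (zeros_ones R (2*i+2))) Q)) (hd (map ((@) (zeros_ones R (2*i+1))) (rev Q)))"
      if "map ((@) (zeros_ones R (2*i+2))) Q \<noteq> []"
      using that assms(2) adjacent_sym[OF adjacent_zeros_ones_Suc[of "2*i+1" R]]
      by (simp add: last_map hd_map hd_rev)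
  qed
  then show ?thesis
    by (simp add: insert_commute layer_Un[symmetric])
qed

fun snake :: "nat \<Rightarrow> bool list list \<Rightarrow> nat \<Rightarrow> bool list list" where
  "snake R Q 0 = []"
| "snake R Q (Suc i) = zigzag R Q i @ snake R Q i"

lemma snake_eq_Nil_iff [simp]: "snake R Q h = [] \<longleftrightarrow> Q = [] \<or> h = 0"
  by (induction h) auto

lemma hd_snake: "Q \<noteq> [] \<Longrightarrow> 0 < h \<Longrightarrow> hd (snake R Q h) = zeros_ones R (2*h) @ hd Q"
  by (cases h) (simp_all add: hd_zigzag)

lemma last_snake: "Q \<noteq> [] \<Longrightarrow> 0 < h \<Longrightarrow> last (snake R Q h) = zeros_ones R 1 @ hd Q"
proof (induction h)
  case (Suc i)
  then show ?case
    by (cases "i = 0") (simp_all add: last_zigzag)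
qed simp

lemma gray1_snake:
  assumes "gray1 Q S" "2*h \<le> R"
  shows "gray1 (snake R Q h) (layer R {1..2*h} S)"
  using assms(2)
proof (induction h)
  case 0
  then show ?case
    by (simp add: gray1_iff_successively)
next
  case (Suc i)
  have "gray1 (snake R Q (Suc i)) (layer R {2*i+1, 2*i+2} S \<union> layer R {1..2*i} S)"
    unfolding snake.simps
  proof (rule gray1_append[OF gray1_zigzag[OF assms(1)] Suc.IH])
    show "layer R {2*i+1, 2*i+2} S \<inter> layer R {1..2*i} S = {}"
      using Suc.prems by (simp add: layer_Int_same_level)
    show "adjacent (last (zigzag R Q i)) (hd (snake R Q i))"
      if "zigzag R Q i \<noteq> []" "snake R Q i \<noteq> []"
      using that Suc.prems adjacent_sym[OF adjacent_zeros_ones_Suc[of "2*i" R]]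
      by (auto simp: last_zigzag hd_snake)
  qed (use Suc.prems in simp_all)
  moreover have "{1..2 * Suc i} = {2*i+1, 2*i+2} \<union> {1..2*i}"
    by auto
  ultimately show ?case
    by (metis layer_Un)
qed

text \<open>A ladder interleaves the zigzags of level \<open>R - 1\<close> through \<open>B\<close> with those of level \<open>R\<close>
  through \<open>A\<close>; if \<open>hd B = False # last A\<close>, consecutive zigzags are joined by rungs.\<close>

fun ladder :: "nat \<Rightarrow> bool list list \<Rightarrow> bool list list \<Rightarrow> nat \<Rightarrow> bool list list" where
  "ladder R A B 0 = []"
| "ladder R A B (Suc i) = zigzag (R - 1) B i @ zigzag R (rev A) i @ ladder R A B i"

lemma ladder_Nil: "ladder R [] B h = snake (R - 1) B h"
  by (induction h) simp_all

lemma ladder_eq_Nil_iff [simp]: "ladder R A B h = [] \<longleftrightarrow> A = [] \<and> B = [] \<or> h = 0"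
  by (induction h) auto

lemma hd_ladder: "B \<noteq> [] \<Longrightarrow> 0 < h \<Longrightarrow> hd (ladder R A B h) = zeros_ones (R - 1) (2*h) @ hd B"
  by (cases h) (simp_all add: hd_zigzag)

lemma last_ladder: "A \<noteq> [] \<Longrightarrow> 0 < h \<Longrightarrow> last (ladder R A B h) = zeros_ones R 1 @ last A"
proof (induction h)
  case (Suc i)
  then show ?case
    by (cases "i = 0") (simp_all add: last_zigzag hd_rev)
qed simp

lemma gray1_ladder:
  assumes A: "gray1 A SA" "A \<noteq> []" and B: "gray1 B SB" "B \<noteq> []" "hd B = False # last A"
    and valid: "\<forall>z\<in>SA \<union> SB. no_leading_one z" and h: "2*h < R"
  shows "gray1 (ladder R A B h) (layer R {1..2*h} SA \<union> layer (R - 1) {1..2*h} SB)"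
  using h
proof (induction h)
  case 0
  then show ?case
    by (simp add: gray1_iff_successively)
next
  case (Suc i)
  let ?J = "{2*i+1, 2*i+2}" and ?I = "{1..2*i}"
  have R: "2*i+2 < R"
    using Suc.prems by simp
  have rung: "adjacent (zeros_ones R (Suc j) @ last A) (zeros_ones (R - 1) j @ hd B)" if "j < R" for j
    using adjacent_zeros_ones_rung[OF that] B(3) by simp
  have other_level: "(layer R ?J SA \<union> layer R ?I SA) \<inter> (layer (R - 1) ?J SB \<union> layer (R - 1) ?I SB) = {}"
    unfolding layer_Un[symmetric] by (rule layer_Int_other_level) (use R valid in auto)
  have same_level: "layer R ?J SA \<inter> layer R ?I SA = {}" "layer (R - 1) ?J SB \<inter> layer (R - 1) ?I SB = {}"
    using R by (subst layer_Int_same_level; auto)+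
  have upper: "gray1 (zigzag R (rev A) i @ ladder R A B i)
      (layer R ?J SA \<union> (layer R ?I SA \<union> layer (R - 1) ?I SB))"
  proof (rule gray1_append[OF gray1_zigzag[OF gray1_rev[OF A(1)]] Suc.IH])
    show "layer R ?J SA \<inter> (layer R ?I SA \<union> layer (R - 1) ?I SB) = {}"
      using same_level other_level by blast
    show "adjacent (last (zigzag R (rev A) i)) (hd (ladder R A B i))"
      if "ladder R A B i \<noteq> []"
      using that A(2) B(2) rung[of "2*i"] Suc.prems by (simp add: last_zigzag hd_ladder hd_rev)
  qed (use Suc.prems in simp_all)
  have "gray1 (ladder R A B (Suc i))
      (layer (R - 1) ?J SB \<union> (layer R ?J SA \<union> (layer R ?I SA \<union> layer (R - 1) ?I SB)))"
    unfolding ladder.simps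
  proof (rule gray1_append[OF gray1_zigzag[OF B(1)] upper])
    show "layer (R - 1) ?J SB \<inter> (layer R ?J SA \<union> (layer R ?I SA \<union> layer (R - 1) ?I SB)) = {}"
      using same_level other_level by blast
    show "adjacent (last (zigzag (R - 1) B i)) (hd (zigzag R (rev A) i @ ladder R A B i))"
      using A(2) B(2) adjacent_sym[OF rung[of "2*i+1"]] Suc.prems
      by (simp add: last_zigzag hd_zigzag hd_rev)
  qed (use Suc.prems in simp)
  moreover have "{1..2 * Suc i} = ?J \<union> ?I"
    by auto
  ultimately show ?case
    by (simp only: layer_Un Un_ac)
qed

lemma gray1_column_then_row:
  assumes "gray1 P S" "P \<noteq> []" "0 < m" "m \<le> R"
  shows "gray1 (map (\<lambda>j. zeros_ones R j @ hd P) [1..<m] @ map ((@) (zeros_ones R m)) P)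
      (layer R {1..<m} {hd P} \<union> layer R {m} S)"
proof (rule gray1_append[OF gray1_column])
  show "gray1 (map ((@) (zeros_ones R m)) P) (layer R {m} S)"
    using gray1_map_append[OF assms(1), of "zeros_ones R m"] by (simp only: image_append_zeros_ones)
  show "layer R {1..<m} {hd P} \<inter> layer R {m} S = {}"
    using assms(4) by (subst layer_Int_same_level) auto
  show "adjacent (last (map (\<lambda>j. zeros_ones R j @ hd P) [1..<m])) (hd (map ((@) (zeros_ones R m)) P))"
    if "map (\<lambda>j. zeros_ones R j @ hd P) [1..<m] \<noteq> []"
    using that assms(2,4) adjacent_zeros_ones_Suc[of "m - 1" R "hd P"] by (simp add: last_map hd_map)
qed (use assms(4) in simp)

lemma gray1_ladder_tl:
  assumes P: "gray1 P S" and B: "gray1 B SB" "B \<noteq> []" "hd B = False # last P"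
    and valid: "\<forall>z\<in>S \<union> SB. no_leading_one z" and h: "2*h < R"
  shows "gray1 (ladder R (tl P) B h) (layer R {1..2*h} (S - {hd P}) \<union> layer (R - 1) {1..2*h} SB)"
proof (cases "tl P = []")
  case True
  then have "S - {hd P} = {}"
    using gray1_tl[OF P] by (simp add: gray1_iff_successively)
  moreover have "gray1 (snake (R - 1) B h) (layer (R - 1) {1..2*h} SB)"
    using h by (intro gray1_snake[OF B(1)]) simp
  ultimately show ?thesis
    unfolding True ladder_Nil by (metis layer_empty(2) sup_bot_left)
next
  case False
  then show ?thesis
    using B(3) valid h by (intro gray1_ladder[OF gray1_tl[OF P] False B(1,2)]) (auto simp: last_tl)
qed

lemma gray1_two_levels:
  assumes P: "gray1 P SP" "P \<noteq> []" and B: "gray1 B SB" "B \<noteq> []" "hd B = False # last P"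
    and valid: "\<forall>z\<in>SP \<union> SB. no_leading_one z" and m: "m = 2*h + 1" "0 < h" "2*m < R"
  defines "L \<equiv> map (\<lambda>j. zeros_ones R j @ hd P) [1..<m] @ map ((@) (zeros_ones R m)) P @ ladder R (tl P) B h"
  shows "gray1 L (layer R {1..m} SP \<union> layer (R - 1) {1..m - 1} SB)"
    and "L \<noteq> []" and "hd L = zeros_ones R 1 @ hd P"
    and "last L = (if tl P = [] then zeros_ones (R - 1) 1 @ hd B else zeros_ones R 1 @ last P)"
proof -
  have "hd P \<in> SP"
    using P by (auto simp: gray1_iff_successively)
  have upper: "gray1 (map (\<lambda>j. zeros_ones R j @ hd P) [1..<m] @ map ((@) (zeros_ones R m)) P)
      (layer R {1..<m} {hd P} \<union> layer R {m} SP)"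
    using m by (intro gray1_column_then_row[OF P]) auto
  have lower: "gray1 (ladder R (tl P) B h) (layer R {1..2*h} (SP - {hd P}) \<union> layer (R - 1) {1..2*h} SB)"
    using m by (intro gray1_ladder_tl[OF P(1) B valid]) auto
  have code: "gray1 L (layer R {1..<m} {hd P} \<union> layer R {m} SP
      \<union> (layer R {1..2*h} (SP - {hd P}) \<union> layer (R - 1) {1..2*h} SB))"
    unfolding L_def append_assoc[symmetric]
  proof (rule gray1_append[OF upper lower])
    have "layer R {1..<m} {hd P} \<subseteq> layer R {1..m} SP" "layer R {m} SP \<subseteq> layer R {1..m} SP"
      using m \<open>hd P \<in> SP\<close> by (intro layer_mono; auto)+
    moreover have "layer R {1..m} SP \<inter> layer (R - 1) {1..2*h} SB = {}"
      using m valid by (intro layer_Int_other_level) auto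
    moreover have "layer R {1..<m} {hd P} \<inter> layer R {1..2*h} (SP - {hd P}) = {}"
      "layer R {m} SP \<inter> layer R {1..2*h} (SP - {hd P}) = {}"
      using m by (subst layer_Int_same_level; auto)+
    ultimately show "(layer R {1..<m} {hd P} \<union> layer R {m} SP)
        \<inter> (layer R {1..2*h} (SP - {hd P}) \<union> layer (R - 1) {1..2*h} SB) = {}"
      by blast
    show "adjacent (last (map (\<lambda>j. zeros_ones R j @ hd P) [1..<m] @ map ((@) (zeros_ones R m)) P))
        (hd (ladder R (tl P) B h))"
      using m P(2) B adjacent_zeros_ones_rung[of "2*h" R "last P"] by (simp add: last_map hd_ladder)
  qed
  have I: "{1..<m} = {1..2*h}" "{1..m} = {1..2*h} \<union> {m}" "m - 1 = 2*h"
    using m by auto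
  have e1: "layer R {1..<m} {hd P} \<union> layer R {1..2*h} (SP - {hd P}) = layer R {1..2*h} SP"
    unfolding I(1) layer_Un_suffixes using \<open>hd P \<in> SP\<close> by (simp add: insert_absorb)
  have e2: "layer R {1..2*h} SP \<union> layer R {m} SP = layer R {1..m} SP"
    unfolding layer_Un[symmetric] I ..
  have "layer R {1..<m} {hd P} \<union> layer R {m} SP \<union> (layer R {1..2*h} (SP - {hd P}) \<union> layer (R - 1) {1..2*h} SB)
      = (layer R {1..<m} {hd P} \<union> layer R {1..2*h} (SP - {hd P})) \<union> layer R {m} SP \<union> layer (R - 1) {1..2*h} SB"
    by (simp only: Un_ac)
  also have "\<dots> = layer R {1..m} SP \<union> layer (R - 1) {1..m - 1} SB"
    unfolding e1 e2 I(3) ..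
  finally show "gray1 L (layer R {1..m} SP \<union> layer (R - 1) {1..m - 1} SB)"
    using code by (simp only:)
  show "L \<noteq> []"
    using P(2) by (simp add: L_def)
  show "hd L = zeros_ones R 1 @ hd P"
    using m by (simp add: L_def hd_map)
  show "last L = (if tl P = [] then zeros_ones (R - 1) 1 @ hd B else zeros_ones R 1 @ last P)"
    using m B(2) by (cases "tl P = []") (simp_all add: L_def ladder_Nil last_snake last_ladder last_tl)
qed

lemma gray1_False_True: "gray1 [[False], [True]] {[False], [True]}"
  using adjacent_flip[of "[]" False "[]" True] by (simp add: gray1_iff_successively)

text \<open>By \<open>layer_True\<close> the level \<open>N\<close> words with suffix 1 are the words \<open>0\<^sup>N\<^sup>-\<^sup>j 1\<^sup>j\<^sup>+\<^sup>1\<close> of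
  level \<open>N + 1\<close>, so a snake through the suffixes 0 and 1 covers two levels.\<close>

lemma gray1_snake_False_True:
  assumes "2*q \<le> N"
  shows "gray1 (snake N [[False], [True]] q) (layer N {1..2*q} {[False]} \<union> layer (Suc N) {2..2*q + 1} {[]})"
proof -
  have "{[False], [True]} = {[False]} \<union> {[True]}"
    by auto
  then have "layer N {1..2*q} {[False], [True]} = layer N {1..2*q} {[False]} \<union> layer N {1..2*q} {[True]}"
    by (simp only: layer_Un_suffixes)
  also have "layer N {1..2*q} {[True]} = layer (Suc N) {2..2*q + 1} {[]}"
    by (simp add: layer_True numeral_2_eq_2)
  finally show ?thesis
    using gray1_snake[OF gray1_False_True assms] by simp
qed

lemma gray1_three_levels:
  assumes p: "p = 2*q + 1" "0 < q" "2*p < N"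
  defines "L \<equiv> map (\<lambda>j. zeros_ones (N - 1) j @ [False, False]) [1..<p] @ [zeros_ones N p @ [False]]
      @ snake N [[False], [True]] q"
  shows "gray1 L (layer (N - 1) {1..<p} {[False, False]} \<union> layer N {1..p} {[False]} \<union> layer (Suc N) {2..p} {[]})"
    and "L \<noteq> []" and "hd L = zeros_ones (N - 1) 1 @ [False, False]" and "last L = zeros_ones N 1 @ [False]"
proof -
  let ?sn = "snake N [[False], [True]] q"
  have snake: "gray1 ?sn (layer N {1..2*q} {[False]} \<union> layer (Suc N) {2..p} {[]})"
    using gray1_snake_False_True[of q N] p by simp
  have tail: "gray1 ([zeros_ones N p @ [False]] @ ?sn)
      (layer N {p} {[False]} \<union> (layer N {1..2*q} {[False]} \<union> layer (Suc N) {2..p} {[]}))"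
  proof (rule gray1_append[OF _ snake])
    show "gray1 [zeros_ones N p @ [False]] (layer N {p} {[False]})"
      using gray1_singleton by (simp add: layer_def)
    have "layer N {p} {[False]} \<inter> layer N {1..2*q} {[False]} = {}"
      using p by (subst layer_Int_same_level) auto
    moreover have "layer N {p} {[False]} \<inter> layer (Suc N) {2..p} {[]} = {}"
      using p by (intro layer_Int_other_level) (auto simp: no_leading_one_def)
    ultimately show "layer N {p} {[False]} \<inter> (layer N {1..2*q} {[False]} \<union> layer (Suc N) {2..p} {[]}) = {}"
      by blast
    show "adjacent (last [zeros_ones N p @ [False]]) (hd ?sn)"
      using p adjacent_sym[OF adjacent_zeros_ones_Suc[of "2*q" N "[False]"]] by (simp add: hd_snake)
  qed
  have "gray1 L (layer (N - 1) {1..<p} {[False, False]}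
      \<union> (layer N {p} {[False]} \<union> (layer N {1..2*q} {[False]} \<union> layer (Suc N) {2..p} {[]})))"
    unfolding L_def
  proof (rule gray1_append[OF gray1_column tail])
    have "layer N {p} {[False]} \<subseteq> layer N {1..p} {[False]}" "layer N {1..2*q} {[False]} \<subseteq> layer N {1..p} {[False]}"
      using p by (intro layer_mono; auto)+
    moreover have "layer (N - 1) {1..<p} {[False, False]} \<inter> layer N {1..p} {[False]} = {}"
      "layer (N - 1) {1..<p} {[False, False]} \<inter> layer (Suc N) {2..p} {[]} = {}"
      using p by (intro layer_Int_other_level; auto simp: no_leading_one_def)+
    ultimately show "layer (N - 1) {1..<p} {[False, False]}
        \<inter> (layer N {p} {[False]} \<union> (layer N {1..2*q} {[False]} \<union> layer (Suc N) {2..p} {[]})) = {}"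
      by blast
    show "adjacent (last (map (\<lambda>j. zeros_ones (N - 1) j @ [False, False]) [1..<p])) (hd ([zeros_ones N p @ [False]] @ ?sn))"
      using p adjacent_sym[OF adjacent_zeros_ones_rung[of "p - 1" N "[False]"]] by (simp add: last_map)
  qed (use p in simp)
  moreover have "layer N {p} {[False]} \<union> layer N {1..2*q} {[False]} = layer N {1..p} {[False]}"
  proof -
    have "{1..p} = {p} \<union> {1..2*q}"
      using p by auto
    then show ?thesis
      by (simp only: layer_Un)
  qed
  ultimately show "gray1 L (layer (N - 1) {1..<p} {[False, False]} \<union> layer N {1..p} {[False]} \<union> layer (Suc N) {2..p} {[]})"
    by (metis Un_assoc)
  show "L \<noteq> []"
    by (simp add: L_def)
  show "hd L = zeros_ones (N - 1) 1 @ [False, False]"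
    using p by (simp add: L_def hd_map)
  show "last L = zeros_ones N 1 @ [False]"
    using p by (simp add: L_def last_snake)
qed

section \<open>The sets \<open>Z\<^sub>k\<close> and \<open>D\<^sup>R\<^sub>n\<close>\<close>

lemma nth_concat_replicate_001:
  "i < 3 * n \<Longrightarrow> concat (replicate n [False, False, True]) ! i = (i mod 3 = 2)"
proof (induction n arbitrary: i)
  case (Suc n)
  show ?case
  proof (cases "i < 3")
    case True
    then have "i = 0 \<or> i = 1 \<or> i = 2"
      by auto
    then show ?thesis
      by (auto simp: nth_append)
  next
    case False
    then obtain j where j: "i = j + 3"
      by (metis le_add_diff_inverse2 not_less)
    then show ?thesis
      using Suc.IH[of j] Suc.prems by (simp add: nth_append)
  qed
qed simp

lemma fill_eq: "fill u n = u @ map (\<lambda>i. i mod 3 = 2) [0..<n - length u]"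
proof -
  have "take (n - length u) (concat (replicate n [False, False, True])) = map (\<lambda>i. i mod 3 = 2) [0..<n - length u]"
    by (rule nth_equalityI) (simp_all add: length_concat sum_list_replicate nth_concat_replicate_001)
  then show ?thesis
    by (simp add: fill_def)
qed

lemma fill_append: "length c \<le> n \<Longrightarrow> fill (c @ u) n = c @ fill u (n - length c)"
  by (simp add: fill_eq)

lemma fill_False_Suc: "fill [False] (Suc k) = False # fill [] k"
  by (simp add: fill_eq)

lemma fill_Nil_add_3: "fill [] (n + 3) = [False, False, True] @ fill [] n"
proof -
  have "[0..<3 + n] = [0..<3] @ [3..<3 + n]"
    by (rule upt_add_eq_append) simp
  then have "[0..<n + 3] = [0..<3] @ map (\<lambda>i. i + 3) [0..<n]"
    by (simp add: map_add_upt add.commute)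
  moreover have "map (\<lambda>i::nat. i mod 3 = 2) [0..<3] = [False, False, True]"
    by (simp add: upt_rec)
  ultimately show ?thesis
    by (simp add: fill_eq)
qed

lemma fill_False_neq_fill_Nil: "3 \<le> k \<Longrightarrow> fill [False] k \<noteq> fill [] k"
proof -
  assume "3 \<le> k"
  then have "[0..<k - 1] ! 1 = 1"
    by (subst nth_upt) auto
  then have "fill [False] k ! 2 \<noteq> fill [] k ! 2"
    using \<open>3 \<le> k\<close> by (simp add: fill_eq)
  then show ?thesis
    by auto
qed

lemma Zset_0: "Zset 0 = {[]}"
  by (simp add: Zset_def)

lemma one_decreasing_replicate_False: "one_decreasing (replicate k False)"
  unfolding one_decreasing_def
proof (intro allI impI)
  fix u a b v
  assume w: "replicate k False = u @ replicate a False @ replicate b True @ v \<and> (u = [] \<or> last u = True)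
      \<and> 0 < a \<and> (0 < b \<or> v = []) \<and> (v = [] \<or> hd v = False)"
  have "True \<notin> set (u @ replicate a False @ replicate b True @ v)"
    using w by (metis in_set_replicate)
  then show "b < a"
    using w by (cases b) auto
qed

lemma Zset_1: "Zset 1 = {[False]}"
  using one_decreasing_replicate_False[of 1] by (auto simp: Zset_def length_Suc_conv)

lemma Zset_2: "Zset 2 = {[False, False]}"
proof -
  have "\<not> one_decreasing [False, True]"
  proof
    assume "one_decreasing [False, True]"
    from this[unfolded one_decreasing_def, rule_format, of "[]" 1 1 "[]"] show False
      by simp
  qed
  then show ?thesis
    using one_decreasing_replicate_False[of 2]
    by (auto simp: Zset_def length_Suc_conv numeral_2_eq_2)
qed

lemma no_leading_one_Zset: "z \<in> Zset k \<Longrightarrow> no_leading_one z"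
  by (auto simp: Zset_def no_leading_one_def split: if_splits)

lemma Dset_eq_layer: "Dset R n = layer R {1..(R - 1) div 2} (Zset (n - R))"
  unfolding Dset_def layer_def zeros_ones_def append_assoc by blast

lemma Dset_three_top_levels_eq:
  assumes n: "n = 2*p + 2" "0 < p"
  shows "(Dset n n \<union> Dset (n - 1) n \<union> Dset (n - 2) n) - {replicate (n - 1) False @ [True]}
      = layer (n - 2) {1..<p} {[False, False]} \<union> layer (n - 1) {1..p} {[False]} \<union> layer n {2..p} {[]}"
proof -
  have "(n - 1) div 2 = p" "(n - 1 - 1) div 2 = p" "(n - 2 - 1) div 2 = p - 1"
    using n by simp_all
  then have D: "Dset n n = layer n {1..p} {[]}" "Dset (n - 1) n = layer (n - 1) {1..p} {[False]}"
    "Dset (n - 2) n = layer (n - 2) {1..<p} {[False, False]}"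
    using n by (simp_all add: Dset_eq_layer Zset_0 Zset_1[unfolded One_nat_def] Zset_2
        atLeastLessThanSuc_atLeastAtMost[symmetric])
  have x: "replicate (n - 1) False @ [True] = zeros_ones n 1"
    by (simp add: zeros_ones_def)
  have top: "layer n {1} {[]} = {zeros_ones n 1}"
    by (simp add: layer_def)
  have "{1..p} = {1} \<union> {2..p}"
    using n by auto
  then have split: "layer n {1..p} {[]} = {zeros_ones n 1} \<union> layer n {2..p} {[]}"
    unfolding top[symmetric] by (simp only: layer_Un)
  have "layer n {1} {[]} \<inter> layer n {2..p} {[]} = {}"
    using n by (subst layer_Int_same_level) auto
  moreover have "layer n {1} {[]} \<inter> layer (n - 1) {1..p} {[False]} = {}"
    "layer n {1} {[]} \<inter> layer (n - 2) {1..<p} {[False, False]} = {}"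
    using n by (intro layer_Int_other_level; auto simp: no_leading_one_def)+
  ultimately have "zeros_ones n 1 \<notin>
      layer n {2..p} {[]} \<union> layer (n - 1) {1..p} {[False]} \<union> layer (n - 2) {1..<p} {[False, False]}"
    unfolding top by blast
  then show ?thesis
    unfolding D x split by blast
qed

section \<open>The Gray codes \<open>\<Delta>\<^sup>r\<^sub>n\<close>\<close>

lemma gray_code_Dset_consecutive:
  assumes R: "R mod 4 = 3" "7 \<le> R" "R \<le> n"
    and P: "gray1 P (Zset (n - R))" "P \<noteq> []"
    and B: "gray1 B (Zset (Suc (n - R)))" "B \<noteq> []" "hd B = False # last P"
  shows "\<exists>L. gray1 L (Dset R n \<union> Dset (R - 1) n) \<and> L \<noteq> [] \<and> hd L = zeros_ones R 1 @ hd P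
           \<and> last L = (if tl P = [] then zeros_ones (R - 1) 1 @ hd B else zeros_ones R 1 @ last P)"
proof -
  define h where "h = R div 4"
  have "R = 4*h + 3"
    using R(1) unfolding h_def by presburger
  then have h: "0 < h" "2 * (2*h + 1) < R" and "(R - 1) div 2 = 2*h + 1" "(R - 1 - 1) div 2 = 2*h"
    using R(2) by simp_all
  moreover have "n - (R - 1) = Suc (n - R)"
    using R by simp
  ultimately have sets: "Dset R n \<union> Dset (R - 1) n
      = layer R {1..2*h + 1} (Zset (n - R)) \<union> layer (R - 1) {1..2*h + 1 - 1} (Zset (Suc (n - R)))"
    by (simp add: Dset_eq_layer)
  have "\<forall>z\<in>Zset (n - R) \<union> Zset (Suc (n - R)). no_leading_one z"
    using no_leading_one_Zset by blast
  note code = gray1_two_levels[OF P B this refl h]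
  show ?thesis
    unfolding sets using code by blast
qed

lemma gray_code_Dset_3:
  assumes "3 < n" and P: "gray1 P (Zset (n - 3))" "P \<noteq> []"
    and "hd P = fill [False] (n - 3)" "last P = fill [] (n - 3)"
  shows "\<exists>L. gray1 L (Dset 3 n) \<and> L \<noteq> [] \<and>
      hd L = fill [False, False, True, False] n \<and> last L = fill [] n"
proof (intro exI conjI)
  have "Dset 3 n = layer 3 {1} (Zset (n - 3))"
    by (simp add: Dset_eq_layer)
  then have "gray1 (map ((@) (zeros_ones 3 1)) P) (Dset 3 n)"
    using gray1_map_append[OF P(1), of "zeros_ones 3 1"] unfolding image_append_zeros_ones by simp
  moreover have "zeros_ones 3 1 = [False, False, True]"
    by (simp add: zeros_ones_def numeral_eq_Suc)
  ultimately show "gray1 (map ((@) [False, False, True]) P) (Dset 3 n)"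
    by simp
  show "map ((@) [False, False, True]) P \<noteq> []"
    using P(2) by simp
  show "hd (map ((@) [False, False, True]) P) = fill [False, False, True, False] n"
  proof -
    have l3: "length [False, False, True] = 3"
      by simp
    show ?thesis
      using fill_append[of "[False, False, True]" n "[False]", unfolded l3] assms by (simp add: hd_map)
  qed
  show "last (map ((@) [False, False, True]) P) = fill [] n"
    using assms fill_Nil_add_3[of "n - 3"] by (simp add: last_map)
qed

lemma gray_code_Dset_n_minus_2:
  assumes "(n - 2) mod 4 = 3" "9 \<le> n"
    and B: "gray1 B (Zset 3)" "B \<noteq> []" "hd B = fill [False] 3"
  shows "\<exists>L. gray1 L (Dset (n - 2) n \<union> Dset (n - 3) n) \<and> L \<noteq> [] \<and>
      hd L = replicate (n - 4) False @ [True, False, False, False] \<and>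
      last L = replicate (n - 3) False @ [True, False, False]"
proof -
  have "n - (n - 2) = 2" "Suc (n - (n - 2)) = 3"
    using assms(2) by simp_all
  moreover have "fill [False] 3 = [False, False, False]"
    by (simp add: fill_eq upt_rec)
  ultimately have "\<exists>L. gray1 L (Dset (n - 2) n \<union> Dset (n - 2 - 1) n) \<and> L \<noteq> [] \<and>
      hd L = zeros_ones (n - 2) 1 @ [False, False] \<and> last L = zeros_ones (n - 2 - 1) 1 @ [False, False, False]"
    using gray_code_Dset_consecutive[of "n - 2" n "[[False, False]]" B] assms by (simp add: Zset_2 gray1_singleton)
  then obtain L where "gray1 L (Dset (n - 2) n \<union> Dset (n - 3) n)" "L \<noteq> []"
    "hd L = zeros_ones (n - 2) 1 @ [False, False]" "last L = zeros_ones (n - 3) 1 @ [False, False, False]"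
    by (auto simp: diff_diff_left)
  then show ?thesis
    by (intro exI[of _ "rev L"]) (simp add: gray1_rev hd_rev last_rev zeros_ones_def)
qed

lemma gray_code_Dset_n_minus_1:
  assumes "n mod 4 = 0" "8 \<le> n"
  shows "\<exists>L. gray1 L ((Dset n n \<union> Dset (n - 1) n \<union> Dset (n - 2) n) - {replicate (n - 1) False @ [True]})
      \<and> L \<noteq> [] \<and> hd L = replicate (n - 3) False @ [True, False, False]
      \<and> last L = replicate (n - 2) False @ [True, False]"
proof -
  define q where "q = n div 4 - 1"
  define p where "p = 2*q + 1"
  have n: "n = 2*p + 2" "0 < q" "0 < p"
    using assms unfolding p_def q_def by presburger+
  then have "2*p < n - 1"
    by simp
  then have "\<exists>L. gray1 L (layer (n - 1 - 1) {1..<p} {[False, False]} \<union> layer (n - 1) {1..p} {[False]}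
        \<union> layer (Suc (n - 1)) {2..p} {[]})
      \<and> L \<noteq> [] \<and> hd L = zeros_ones (n - 1 - 1) 1 @ [False, False] \<and> last L = zeros_ones (n - 1) 1 @ [False]"
    using gray1_three_levels[OF p_def n(2)] by blast
  moreover have "Suc (n - 1) = n" "n - 1 - 1 = n - 2"
    using n by simp_all
  moreover have "zeros_ones (n - 2) 1 @ [False, False] = replicate (n - 3) False @ [True, False, False]"
    "zeros_ones (n - 1) 1 @ [False] = replicate (n - 2) False @ [True, False]"
    by (simp_all add: zeros_ones_def)
  ultimately show ?thesis
    unfolding Dset_three_top_levels_eq[OF n(1,3)] by (simp only:)
qed

lemma gray_code_Dset_n:
  assumes "n mod 4 = 3" "7 \<le> n"
  shows "\<exists>L. gray1 L (Dset n n \<union> Dset (n - 1) n) \<and> L \<noteq> [] \<and>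
      hd L = replicate (n - 2) False @ [True, False] \<and>
      last L = replicate (n - 1) False @ [True]"
proof -
  have "gray1 [[]] (Zset (n - n))" "gray1 [[False]] (Zset (Suc (n - n)))"
    by (simp_all add: Zset_0 Zset_1[unfolded One_nat_def] gray1_singleton)
  then obtain L where "gray1 L (Dset n n \<union> Dset (n - 1) n)" "L \<noteq> []"
    "hd L = zeros_ones n 1" "last L = zeros_ones (n - 1) 1 @ [False]"
    using gray_code_Dset_consecutive[of n n "[[]]" "[[False]]"] assms by auto
  then show ?thesis
    by (intro exI[of _ "rev L"]) (simp add: gray1_rev hd_rev last_rev zeros_ones_def)
qed

lemma gray_code_Dset_r_le_n_minus_3:
  assumes r: "r mod 4 = 3" "7 \<le> r" "r + 3 \<le> n"
    and P: "gray1 P (Zset (n - r))" "P \<noteq> []" "hd P = fill [False] (n - r)" "last P = fill [] (n - r)"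
    and B: "gray1 B (Zset (Suc (n - r)))" "B \<noteq> []" "hd B = fill [False] (Suc (n - r))"
  shows "\<exists>L. gray1 L (Dset r n \<union> Dset (r - 1) n) \<and> L \<noteq> [] \<and>
      hd L = fill (replicate (r - 1) False @ [True, False]) n \<and>
      last L = fill (replicate (r - 1) False @ [True]) n"
proof -
  have "hd B = False # last P"
    using B(3) P(4) by (simp add: fill_False_Suc)
  then obtain L where L: "gray1 L (Dset r n \<union> Dset (r - 1) n)" "L \<noteq> []" "hd L = zeros_ones r 1 @ hd P"
    "last L = (if tl P = [] then zeros_ones (r - 1) 1 @ hd B else zeros_ones r 1 @ last P)"
    using gray_code_Dset_consecutive[OF r(1,2) _ P(1,2) B(1,2)] r(3) by auto
  have "tl P \<noteq> []"
    using P(2-4) fill_False_neq_fill_Nil[of "n - r"] r(3) by (cases P) auto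
  then have "last L = zeros_ones r 1 @ fill [] (n - r)"
    using L(4) P(4) by simp
  moreover have "fill (replicate (r - 1) False @ [True, False]) n = zeros_ones r 1 @ fill [False] (n - r)"
    "fill (replicate (r - 1) False @ [True]) n = zeros_ones r 1 @ fill [] (n - r)"
    using fill_append[of "zeros_ones r 1" n "[False]"] fill_append[of "zeros_ones r 1" n "[]"] r
    by (simp_all add: zeros_ones_def)
  ultimately show ?thesis
    using L(1-3) P(3) by auto
qed

theorem lemma5:
  fixes n r :: nat and Z :: "nat \<Rightarrow> bool list list"
  assumes "n > 3" and "r mod 4 = 3" and "3 \<le> r" and "r \<le> n"
    and hZ: "\<forall>k<n. gray1 (Z k) (Zset k) \<and> Z k \<noteq> []"
    and hZfl: "\<forall>k. 0 < k \<and> k < n \<longrightarrow>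
                 hd (Z k) = fill [False] k \<and> last (Z k) = fill [] k"
  shows
   "(r = 3 \<longrightarrow> (\<exists>L. gray1 L (Dset 3 n) \<and> L \<noteq> [] \<and>
        hd L = fill [False, False, True, False] n \<and> last L = fill [] n))
  \<and> (r \<noteq> 3 \<and> r = n - 2 \<longrightarrow> (\<exists>L. gray1 L (Dset (n - 2) n \<union> Dset (n - 3) n) \<and> L \<noteq> [] \<and>
        hd L = replicate (n - 4) False @ [True, False, False, False] \<and>
        last L = replicate (n - 3) False @ [True, False, False]))
  \<and> (r \<noteq> 3 \<and> r = n - 1 \<longrightarrow> (\<exists>L.
        gray1 L ((Dset n n \<union> Dset (n - 1) n \<union> Dset (n - 2) n) - {replicate (n - 1) False @ [True]})
        \<and> L \<noteq> [] \<and>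
        hd L = replicate (n - 3) False @ [True, False, False] \<and>
        last L = replicate (n - 2) False @ [True, False]))
  \<and> (r \<noteq> 3 \<and> r = n \<longrightarrow> (\<exists>L. gray1 L (Dset n n \<union> Dset (n - 1) n) \<and> L \<noteq> [] \<and>
        hd L = replicate (n - 2) False @ [True, False] \<and>
        last L = replicate (n - 1) False @ [True]))
  \<and> (r \<notin> {3, n - 2, n - 1, n} \<longrightarrow> (\<exists>L. gray1 L (Dset r n \<union> Dset (r - 1) n) \<and> L \<noteq> [] \<and>
        hd L = fill (replicate (r - 1) False @ [True, False]) n \<and>
        last L = fill (replicate (r - 1) False @ [True]) n))"
proof -
  have Z: "gray1 (Z k) (Zset k)" "Z k \<noteq> []" "hd (Z k) = fill [False] k" "last (Z k) = fill [] k"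
    if "0 < k" "k < n" for k
    using hZ hZfl that by auto
  have r: "r \<noteq> 3 \<Longrightarrow> 7 \<le> r"
    using assms(2,3) by presburger
  show ?thesis
    apply (intro conjI impI)
    subgoal
      using assms(1) Z[of "n - 3"] by (intro gray_code_Dset_3) auto
    subgoal
      using assms(2) r Z[of 3] by (intro gray_code_Dset_n_minus_2[of n "Z 3"]) auto
    subgoal premises prems
    proof (rule gray_code_Dset_n_minus_1)
      have "n = Suc r" "7 \<le> r"
        using prems assms(1) r by auto
      then show "n mod 4 = 0" "8 \<le> n"
        using assms(2) by (simp_all add: mod_Suc)
    qed
    subgoal
      using assms(2) r by (intro gray_code_Dset_n) auto
    subgoal
      using assms(2,4) r Z[of "n - r"] Z[of "Suc (n - r)"]
      by (intro gray_code_Dset_r_le_n_minus_3[of r n "Z (n - r)" "Z (Suc (n - r))"]) auto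
    done
qed
end
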